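(* For each integer $n\ge1$, let $V_n=\{a_1,\dots,a_{n+1}\}$ consist of $n+1$ pairwise different letters and $L_{9,n}=\{a_1\}^+\{a_2\}^+\cdots\{a_{n+1}\}^+$. Then $L_{9,n}\in\mathrm{SLT}_2\setminus\mathrm{RL}_n^V$.
   Context: Strictly locally testable languages: let $V$ be an alphabet and $k\ge1$. For $B,I,E\subseteq V^k$ and $F\subseteq V^{\le k-1}$, $\mathrm{slt}(B,I,E,F)$ is the language over $V$ consisting of all words in $F$ together with all words $a_1\cdots a_n$ ($a_i\in V$, $n\ge k$) with $a_1\cdots a_k\in B$, $a_{j+1}\cdots a_{j+k}\in I$ for all $1\le j\le n-k-1$, and $a_{n-k+1}\cdots a_n\in E$. $\mathrm{SLT}_k$ is the family of languages of this form. A right-linear grammar is $G=(N,T,P,S)$ with rules $A\to wB$ or $A\to w$ ($A,B\in N$, $w\in T^*$). For a regular language $L$, $\mathrm{Var}_{RL}(L)$ is the minimum of $|N|$ over all right-linear grammars generating $L$; $\mathrm{RL}_n^V=\{L\text{ regular}:\mathrm{Var}_{RL}(L)\le n\}$. *)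

theory Defs
  imports Main
begin

definition kwords :: "'a set \<Rightarrow> nat \<Rightarrow> 'a list set" where
  "kwords V k = {w. set w \<subseteq> V \<and> length w = k}"

(* slt(B,I,E,F) over V, with 0-based indexing: the factor a_{j+1}..a_{j+k}
   of the paper is take k (drop j w). *)
definition slt :: "'a set \<Rightarrow> nat \<Rightarrow> 'a list set \<Rightarrow> 'a list set \<Rightarrow> 'a list set
                   \<Rightarrow> 'a list set \<Rightarrow> 'a list set" where
  "slt V k B I E F = F \<union>
     {w. set w \<subseteq> V \<and> length w \<ge> k \<and> take k w \<in> B
         \<and> (\<forall>j. 1 \<le> j \<and> j \<le> length w - k - 1 \<longrightarrow> take k (drop j w) \<in> I)
         \<and> drop (length w - k) w \<in> E}"

definition SLT :: "'a set \<Rightarrow> nat \<Rightarrow> 'a list set set" where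
  "SLT V k = {L. \<exists>B I E F. B \<subseteq> kwords V k \<and> I \<subseteq> kwords V k \<and> E \<subseteq> kwords V k
                  \<and> F \<subseteq> {w. set w \<subseteq> V \<and> length w \<le> k - 1}
                  \<and> L = slt V k B I E F}"

(* Right-linear grammars with nonterminals from nat (any finite nonterminal set can be renamed).
   A production (A, w, Some B) is A -> wB, a production (A, w, None) is A -> w. *)
definition rlg :: "nat set \<Rightarrow> 'a set \<Rightarrow> (nat \<times> 'a list \<times> nat option) set \<Rightarrow> nat \<Rightarrow> bool" where
  "rlg N T P S \<longleftrightarrow> finite N \<and> finite T \<and> finite P \<and> S \<in> N \<and>
     (\<forall>(A, w, r) \<in> P. A \<in> N \<and> set w \<subseteq> T \<and> (\<forall>B. r = Some B \<longrightarrow> B \<in> N))"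

inductive derives :: "(nat \<times> 'a list \<times> nat option) set \<Rightarrow> nat \<Rightarrow> 'a list \<Rightarrow> bool"
  for P where
  term_rule: "(A, w, None) \<in> P \<Longrightarrow> derives P A w"
| step_rule: "(A, u, Some B) \<in> P \<Longrightarrow> derives P B v \<Longrightarrow> derives P A (u @ v)"

definition rl_lang :: "(nat \<times> 'a list \<times> nat option) set \<Rightarrow> nat \<Rightarrow> 'a list set" where
  "rl_lang P S = {w. derives P S w}"

(* RL_n^V: languages generated by a right-linear grammar with at most n nonterminals,
   i.e. Var_RL(L) <= n (such languages are automatically regular). *)
definition RL_Var :: "nat \<Rightarrow> 'a list set set" where
  "RL_Var n = {L. \<exists>N T P S. rlg N T P S \<and> card N \<le> n \<and> rl_lang P S = L}"

definition L9 :: "(nat \<Rightarrow> 'a) \<Rightarrow> nat \<Rightarrow> 'a list set" where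
  "L9 a n = {concat (map (\<lambda>i. replicate (k i) (a i)) [1..<n+2]) | k.
               \<forall>i\<in>{1..n+1}. k i \<ge> 1}"

end

theory Submission
  imports Defs
begin

text \<open>Writing a word of \<open>L\<^sub>9\<^sub>,\<^sub>n\<close> as \<open>map a xs\<close>, the index words \<open>xs\<close> are exactly the
words from \<open>1\<close> to \<open>n + 1\<close> in which every letter is followed by itself or its successor.
Such words are determined by their first letter, their last letter and their 2-factors, so they
form a strictly 2-testable language, and an injective renaming of letters preserves this.

Given a right-linear grammar with at most \<open>n\<close> nonterminals, derive
\<open>a\<^sub>1\<^sup>M \<cdots> a\<^sub>n\<^sub>+\<^sub>1\<^sup>M\<close> with \<open>M\<close> longer than every right-hand side. Inside each of the
\<open>n + 1\<close> blocks the derivation passes through a sentential form \<open>u X\<close>, so two blocks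
\<open>b < b'\<close> share the nonterminal \<open>X\<close>. Gluing the prefix cut in block \<open>b'\<close> to the suffix cut in
block \<open>b\<close> gives a derivable word in which \<open>a\<^sub>b\<^sub>'\<^sub>+\<^sub>1\<close> is immediately followed by
\<open>a\<^sub>b\<^sub>+\<^sub>1\<close>, which is not in \<open>L\<^sub>9\<^sub>,\<^sub>n\<close>.\<close>

section \<open>Staircase words\<close>

definition staircase_words :: "nat \<Rightarrow> nat \<Rightarrow> nat list set" where
  "staircase_words l r = {xs. xs \<noteq> [] \<and> hd xs = l \<and> last xs = r
     \<and> successively (\<lambda>i j. j = i \<or> j = Suc i) xs}"

abbreviation blocks :: "(nat \<Rightarrow> nat) \<Rightarrow> nat \<Rightarrow> nat \<Rightarrow> nat list" where
  "blocks k l r \<equiv> concat (map (\<lambda>i. replicate (k i) i) [l..<Suc r])"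

lemma blocks_Suc: "l \<le> Suc r \<Longrightarrow> blocks k l (Suc r) = blocks k l r @ replicate (k (Suc r)) (Suc r)"
  by (simp del: upt_Suc add: upt_Suc_append)

lemma blocks_cong: "(\<And>i. l \<le> i \<Longrightarrow> i \<le> r \<Longrightarrow> k i = k' i) \<Longrightarrow> blocks k l r = blocks k' l r"
  by (intro arg_cong[where f = concat] map_cong) auto

lemma blocks_update_last:
  assumes "l \<le> r"
  shows "blocks (k(r := c)) l r = concat (map (\<lambda>i. replicate (k i) i) [l..<r]) @ replicate c r"
proof -
  have "map (\<lambda>i. replicate ((k(r := c)) i) i) [l..<r] = map (\<lambda>i. replicate (k i) i) [l..<r]"
    by (intro map_cong) auto
  then show ?thesis
    by (simp only: upt_Suc_append[OF assms] map_append concat_append list.map concat.simps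
        fun_upd_same append_Nil2)
qed

lemma successively_stay_replicate: "successively (\<lambda>i j. j = i \<or> j = Suc i) (replicate m x)"
  by (induction m) (auto simp: successively_Cons)

lemma replicate_in_staircase_words: "replicate (Suc m) l \<in> staircase_words l l"
  using successively_stay_replicate[of "Suc m" l]
  by (auto simp: staircase_words_def simp del: replicate_Suc)

lemma staircase_words_append_replicate:
  assumes "xs \<in> staircase_words l r"
  shows "xs @ replicate (Suc m) (Suc r) \<in> staircase_words l (Suc r)"
  using assms successively_stay_replicate[of "Suc m" "Suc r"]
  by (auto simp: staircase_words_def successively_append_iff simp del: replicate_Suc)

lemma blocks_in_staircase_words:
  assumes "l \<le> r" "\<forall>i\<in>{l..r}. 1 \<le> k i"
  shows "blocks k l r \<in> staircase_words l r"
  using assms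
proof (induction r)
  case 0
  then obtain m where "k 0 = Suc m"
    by (metis atLeastAtMost_singleton' le_zero_eq not0_implies_Suc not_one_le_zero singletonI)
  then show ?case
    using 0 replicate_in_staircase_words by simp
next
  case (Suc r)
  obtain m where m: "k (Suc r) = Suc m"
    using Suc.prems by (metis atLeastAtMost_iff le_refl not0_implies_Suc not_one_le_zero)
  show ?case
  proof (cases "l = Suc r")
    case True
    then show ?thesis
      using m replicate_in_staircase_words by simp
  next
    case False
    then have "blocks k l r \<in> staircase_words l r"
      using Suc by auto
    then show ?thesis
      using Suc.prems m staircase_words_append_replicate by (simp add: blocks_Suc del: upt_Suc)
  qed
qed

lemma successively_stay_or_step_eq_blocks:
  assumes "xs \<noteq> []" "successively (\<lambda>i j. j = i \<or> j = Suc i) xs"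
  shows "\<exists>k. (\<forall>i\<in>{hd xs..last xs}. 1 \<le> k i) \<and> xs = blocks k (hd xs) (last xs) \<and> hd xs \<le> last xs"
  using assms
proof (induction xs rule: rev_induct)
  case Nil
  then show ?case by simp
next
  case (snoc x xs)
  show ?case
  proof (cases "xs = []")
    case True
    then show ?thesis by (intro exI[of _ "\<lambda>_. 1"]) auto
  next
    case False
    have step: "x = last xs \<or> x = Suc (last xs)"
      using snoc.prems False by (auto simp: successively_append_iff)
    obtain k where k: "\<forall>i\<in>{hd xs..last xs}. 1 \<le> k i" "xs = blocks k (hd xs) (last xs)"
      "hd xs \<le> last xs"
      using snoc False by (auto simp: successively_append_iff)
    from step show ?thesis
    proof
      assume x: "x = last xs"
      have "blocks (k(x := Suc (k x))) (hd xs) x = blocks k (hd xs) x @ [x]"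
        using blocks_update_last[of "hd xs" x k "k x"] blocks_update_last[of "hd xs" x k "Suc (k x)"]
          k(3) x
        by (simp add: replicate_append_same del: upt_Suc fun_upd_apply)
      then show ?thesis
        using k False x by (intro exI[of _ "k(x := Suc (k x))"]) auto
    next
      assume x: "x = Suc (last xs)"
      have "blocks (k(x := 1)) (hd xs) x = blocks (k(x := 1)) (hd xs) (last xs) @ [x]"
        using k(3) x by (simp add: blocks_Suc del: upt_Suc)
      also have "blocks (k(x := 1)) (hd xs) (last xs) = blocks k (hd xs) (last xs)"
        using x by (intro blocks_cong) auto
      finally show ?thesis
        using k False x by (intro exI[of _ "k(x := 1)"]) auto
    qed
  qed
qed

lemma staircase_words_obtain_blocks:
  assumes "xs \<in> staircase_words l r"
  obtains k where "\<forall>i\<in>{l..r}. 1 \<le> k i" "xs = blocks k l r"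
  using assms successively_stay_or_step_eq_blocks[of xs] that by (auto simp: staircase_words_def)

lemma staircase_words_sorted: "xs \<in> staircase_words l r \<Longrightarrow> sorted xs"
  unfolding staircase_words_def successively_conv_sorted_wrt[OF transp_on_le, symmetric]
  by (auto elim: successively_mono)

lemma set_staircase_words: "xs \<in> staircase_words l r \<Longrightarrow> set xs \<subseteq> {l..r}"
  using staircase_words_sorted[of xs l r]
  by (auto simp: staircase_words_def sorted_iff_nth_mono in_set_conv_nth hd_conv_nth last_conv_nth)

lemma L9_eq_map_staircase_words: "L9 a n = map a ` staircase_words 1 (Suc n)"
proof -
  have "concat (map (\<lambda>i. replicate (k i) (a i)) [1..<n+2]) = map a (blocks k 1 (Suc n))" for k
    by (simp add: map_concat comp_def del: upt_Suc)
  then have "L9 a n = map a ` {blocks k 1 (Suc n) | k. \<forall>i\<in>{1..Suc n}. 1 \<le> k i}"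
    unfolding L9_def by (simp only: Suc_eq_plus1) blast
  also have "{blocks k 1 (Suc n) | k. \<forall>i\<in>{1..Suc n}. 1 \<le> k i} = staircase_words 1 (Suc n)"
    by (auto simp del: upt_Suc intro: blocks_in_staircase_words elim!: staircase_words_obtain_blocks)
  finally show ?thesis .
qed

section \<open>Strict 2-testability\<close>

lemma map_in_map_image_iff:
  assumes "inj_on a A" "set xs \<subseteq> A" "X \<subseteq> lists A"
  shows "map a xs \<in> map a ` X \<longleftrightarrow> xs \<in> X"
proof
  assume "map a xs \<in> map a ` X"
  then obtain ys where "ys \<in> X" "map a xs = map a ys"
    by blast
  moreover have "inj_on a (set xs \<union> set ys)"
    using assms \<open>ys \<in> X\<close> by (auto intro: inj_on_subset)
  ultimately show "xs \<in> X"
    by (simp add: inj_on_map_eq_map)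
qed blast

lemma map_image_slt:
  assumes inj: "inj_on a A"
    and "B \<subseteq> lists A" "I \<subseteq> lists A" "E \<subseteq> lists A" "F \<subseteq> lists A"
  shows "map a ` slt A k B I E F = slt (a ` A) k (map a ` B) (map a ` I) (map a ` E) (map a ` F)"
proof (intro equalityI subsetI)
  fix w assume "w \<in> map a ` slt A k B I E F"
  then show "w \<in> slt (a ` A) k (map a ` B) (map a ` I) (map a ` E) (map a ` F)"
    by (fastforce simp: slt_def take_map drop_map)
next
  fix w assume w: "w \<in> slt (a ` A) k (map a ` B) (map a ` I) (map a ` E) (map a ` F)"
  show "w \<in> map a ` slt A k B I E F"
  proof (cases "w \<in> map a ` F")
    case True
    then show ?thesis by (auto simp: slt_def)
  next
    case False
    define xs where "xs = map (inv_into A a) w"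
    have "set w \<subseteq> a ` A"
      using w False by (simp add: slt_def)
    then have w_eq: "w = map a xs" and xs_A: "set xs \<subseteq> A"
      by (auto simp: xs_def f_inv_into_f inv_into_into intro!: map_idI[symmetric])
    have sub: "set (take k (drop j xs)) \<subseteq> A" "set (take k xs) \<subseteq> A" "set (drop j xs) \<subseteq> A" for j
      using xs_A set_take_subset set_drop_subset
      by (metis order.trans)+
    have "xs \<in> slt A k B I E F"
      using w False xs_A
      by (simp add: slt_def w_eq take_map drop_map map_in_map_image_iff[OF inj sub(1)]
          map_in_map_image_iff[OF inj sub(2)] map_in_map_image_iff[OF inj sub(3)] assms(2-4))
    then show ?thesis
      using w_eq by blast
  qed
qed

lemma SLT_map_image:
  assumes inj: "inj_on a A" and "L \<in> SLT A k"
  shows "map a ` L \<in> SLT (a ` A) k"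
proof -
  obtain B I E F where sub: "B \<subseteq> kwords A k" "I \<subseteq> kwords A k" "E \<subseteq> kwords A k"
      "F \<subseteq> {w. set w \<subseteq> A \<and> length w \<le> k - 1}" and L: "L = slt A k B I E F"
    using assms(2) unfolding SLT_def by auto
  have "B \<subseteq> lists A" "I \<subseteq> lists A" "E \<subseteq> lists A" "F \<subseteq> lists A"
    using sub by (auto simp: kwords_def)
  then have "map a ` L = slt (a ` A) k (map a ` B) (map a ` I) (map a ` E) (map a ` F)"
    unfolding L by (rule map_image_slt[OF inj])
  moreover have "map a ` X \<subseteq> kwords (a ` A) k" if "X \<subseteq> kwords A k" for X
    using that by (fastforce simp: kwords_def)
  moreover have "map a ` F \<subseteq> {w. set w \<subseteq> a ` A \<and> length w \<le> k - 1}"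
    using sub(4) by fastforce
  ultimately show ?thesis
    using sub unfolding SLT_def
    by (intro CollectI exI[of _ "map a ` B"] exI[of _ "map a ` I"] exI[of _ "map a ` E"]
        exI[of _ "map a ` F"]) simp
qed

lemma staircase_words_length:
  assumes "xs \<in> staircase_words l r" "l < r"
  shows "2 \<le> length xs"
proof -
  have "length xs \<noteq> 1"
    using assms by (auto simp: staircase_words_def length_Suc_conv)
  then show ?thesis
    using assms(1) by (cases xs) (auto simp: staircase_words_def Suc_le_eq)
qed

lemma all_Suc_less_split:
  assumes "2 \<le> m"
  shows "(\<forall>j. Suc j < m \<longrightarrow> P j) \<longleftrightarrow> P 0 \<and> (\<forall>j. 1 \<le> j \<and> j \<le> m - 2 - 1 \<longrightarrow> P j) \<and> P (m - 2)"
proof (intro iffI allI impI)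
  fix j assume all: "P 0 \<and> (\<forall>j. 1 \<le> j \<and> j \<le> m - 2 - 1 \<longrightarrow> P j) \<and> P (m - 2)" "Suc j < m"
  then consider "j = 0" | "j = m - 2" | "1 \<le> j \<and> j \<le> m - 2 - 1"
    by linarith
  then show "P j"
    using all by cases auto
qed (use assms in auto)

lemma take_2_drop: "Suc j < length xs \<Longrightarrow> take 2 (drop j xs) = [xs ! j, xs ! Suc j]"
  by (simp add: Cons_nth_drop_Suc[symmetric] numeral_2_eq_2)

lemma staircase_words_in_SLT:
  assumes "l < r"
  shows "staircase_words l r \<in> SLT {l..r} 2"
proof -
  define I where "I = {[i, j] | i j. i \<in> {l..r} \<and> j \<in> {l..r} \<and> (j = i \<or> j = Suc i)}"
  define B where "B = {u \<in> I. hd u = l}"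
  define E where "E = {u \<in> I. last u = r}"
  have window_in_I: "take 2 (drop j xs) \<in> I \<longleftrightarrow> xs ! Suc j = xs ! j \<or> xs ! Suc j = Suc (xs ! j)"
    if "set xs \<subseteq> {l..r}" "Suc j < length xs" for xs j
  proof -
    have "xs ! j \<in> {l..r}" "xs ! Suc j \<in> {l..r}"
      using that nth_mem by (metis Suc_lessD subsetD)+
    then show ?thesis
      using that by (auto simp: take_2_drop I_def)
  qed
  have "staircase_words l r = slt {l..r} 2 B I E {}"
  proof (intro equalityI subsetI)
    fix xs assume xs: "xs \<in> staircase_words l r"
    then have set_xs: "set xs \<subseteq> {l..r}"
      by (rule set_staircase_words)
    have len: "2 \<le> length xs"
      using xs assms by (rule staircase_words_length)
    have "\<forall>j. Suc j < length xs \<longrightarrow> take 2 (drop j xs) \<in> I"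
      using xs by (auto simp: window_in_I[OF set_xs] staircase_words_def successively_conv_nth)
    then show "xs \<in> slt {l..r} 2 B I E {}"
      using xs len set_xs unfolding all_Suc_less_split[OF len]
      by (auto simp: slt_def B_def E_def staircase_words_def hd_take last_drop)
  next
    fix xs assume "xs \<in> slt {l..r} 2 B I E {}"
    then have set_xs: "set xs \<subseteq> {l..r}" and len: "2 \<le> length xs"
      and first: "take 2 xs \<in> I" "hd xs = l" and final: "drop (length xs - 2) xs \<in> I" "last xs = r"
      and middle: "\<forall>j. 1 \<le> j \<and> j \<le> length xs - 2 - 1 \<longrightarrow> take 2 (drop j xs) \<in> I"
      by (auto simp: slt_def B_def E_def hd_take last_drop)
    have "\<forall>j. Suc j < length xs \<longrightarrow> take 2 (drop j xs) \<in> I"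
      unfolding all_Suc_less_split[OF len] using first final middle by simp
    then show "xs \<in> staircase_words l r"
      using first final len
      by (auto simp: window_in_I[OF set_xs] staircase_words_def successively_conv_nth)
  qed
  moreover have "B \<subseteq> kwords {l..r} 2" "I \<subseteq> kwords {l..r} 2" "E \<subseteq> kwords {l..r} 2"
    by (auto simp: B_def I_def E_def kwords_def)
  ultimately show ?thesis
    unfolding SLT_def by (intro CollectI exI[of _ B] exI[of _ I] exI[of _ E] exI[of _ "{}"]) auto
qed

section \<open>Splicing derivations of right-linear grammars\<close>

inductive reaches :: "(nat \<times> 'a list \<times> nat option) set \<Rightarrow> nat \<Rightarrow> 'a list \<Rightarrow> nat \<Rightarrow> bool"
  for P where
  reaches_refl: "reaches P A [] A"
| reaches_step: "(A, u, Some B) \<in> P \<Longrightarrow> reaches P B v X \<Longrightarrow> reaches P A (u @ v) X"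

lemma reaches_derives: "reaches P A u X \<Longrightarrow> derives P X v \<Longrightarrow> derives P A (u @ v)"
  by (induction rule: reaches.induct) (auto dest: step_rule)

lemma reaches_in_nonterminals: "reaches P A u X \<Longrightarrow> rlg N T P S \<Longrightarrow> A \<in> N \<Longrightarrow> X \<in> N"
  by (induction rule: reaches.induct) (auto simp: rlg_def)

lemma rlg_rule_length_bound:
  assumes "rlg N T P S"
  obtains m where "\<forall>(A, u, r) \<in> P. length u < m"
proof -
  have "finite ((\<lambda>(A, u, r). length u) ` P)"
    using assms by (simp add: rlg_def)
  then obtain m where "\<forall>l \<in> (\<lambda>(A, u, r). length u) ` P. l < m"
    unfolding finite_nat_set_iff_bounded by blast
  then have "\<forall>(A, u, r) \<in> P. length u < m"
    by auto
  then show thesis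
    by (rule that)
qed

lemma derives_split_in_window:
  assumes "derives P A w" "\<forall>(B, u, r) \<in> P. length u < m" "s + m \<le> length w"
  shows "\<exists>p X. s \<le> p \<and> p < s + m \<and> reaches P A (take p w) X \<and> derives P X (drop p w)"
  using assms
proof (induction arbitrary: s rule: derives.induct)
  case (term_rule A w)
  then show ?case by fastforce
next
  case (step_rule A u B v)
  have u_short: "length u < m"
    using step_rule.prems(1) step_rule.hyps(1) by fastforce
  show ?case
  proof (cases "s \<le> length u")
    case True
    have "reaches P A (u @ []) B"
      by (rule reaches_step[OF step_rule.hyps(1) reaches_refl])
    then show ?thesis
      using True u_short step_rule.hyps(2) by (intro exI[of _ "length u"] exI[of _ B]) auto
  next
    case False
    then have "s - length u + m \<le> length v"
      using step_rule.prems(2) by simp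
    then obtain p X where "s - length u \<le> p" "p < s - length u + m"
      "reaches P B (take p v) X" "derives P X (drop p v)"
      using step_rule.IH[of "s - length u"] step_rule.prems(1) by blast
    moreover have "reaches P A (u @ take p v) X"
      by (rule reaches_step[OF step_rule.hyps(1) \<open>reaches P B (take p v) X\<close>])
    ultimately show ?thesis
      using False by (intro exI[of _ "length u + p"] exI[of _ X]) auto
  qed
qed

lemma rl_lang_splice:
  assumes G: "rlg N T P S" and card: "card N \<le> n" and w: "w \<in> rl_lang P S"
    and short: "\<forall>(A, u, r) \<in> P. length u < m" and windows: "\<forall>b\<le>n. s b + m \<le> length w"
  shows "\<exists>b b' p q. b < b' \<and> b' \<le> n \<and> s b \<le> p \<and> p < s b + m \<and> s b' \<le> q \<and> q < s b' + m
           \<and> take q w @ drop p w \<in> rl_lang P S"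
proof -
  have "\<forall>b\<in>{..n}. \<exists>c. s b \<le> fst c \<and> fst c < s b + m
      \<and> reaches P S (take (fst c) w) (snd c) \<and> derives P (snd c) (drop (fst c) w)"
    using derives_split_in_window[OF _ short] w windows by (auto simp: rl_lang_def)
  then obtain c where c: "\<And>b. b \<le> n \<Longrightarrow> s b \<le> fst (c b) \<and> fst (c b) < s b + m
      \<and> reaches P S (take (fst (c b)) w) (snd (c b)) \<and> derives P (snd (c b)) (drop (fst (c b)) w)"
    by (metis atMost_iff bchoice)
  have "\<not> inj_on (\<lambda>b. snd (c b)) {..n}"
  proof
    assume "inj_on (\<lambda>b. snd (c b)) {..n}"
    moreover have "(\<lambda>b. snd (c b)) ` {..n} \<subseteq> N"
      using c G reaches_in_nonterminals by (fastforce simp: rlg_def)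
    ultimately have "card {..n} \<le> card N"
      using G by (intro card_inj_on_le) (auto simp: rlg_def)
    then show False
      using card by simp
  qed
  then obtain b b' where bb': "b \<le> n" "b' \<le> n" "b \<noteq> b'" "snd (c b) = snd (c b')"
    unfolding inj_on_def by auto
  have splice: "take (fst (c j')) w @ drop (fst (c j)) w \<in> rl_lang P S"
    if "j \<le> n" "j' \<le> n" "snd (c j) = snd (c j')" for j j'
    using c[OF that(1)] c[OF that(2)] that(3) reaches_derives by (fastforce simp: rl_lang_def)
  consider "b < b'" | "b' < b"
    using bb'(3) by linarith
  then show ?thesis
  proof cases
    case 1
    then show ?thesis
      using bb' c splice by blast
  next
    case 2
    then show ?thesis
      using bb' c splice by (metis (no_types, lifting))
  qed
qed

lemma nth_concat_replicate:
  "j < length xs * M \<Longrightarrow> concat (map (\<lambda>i. replicate M (f i)) xs) ! j = f (xs ! (j div M))"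
proof (induction xs arbitrary: j)
  case Nil
  then show ?case by simp
next
  case (Cons x xs)
  show ?case
  proof (cases "j < M")
    case True
    then show ?thesis by (simp add: nth_append)
  next
    case False
    moreover have "0 < M"
      by (rule ccontr) (use Cons.prems in simp)
    ultimately have "j - M < length xs * M" "j div M = Suc ((j - M) div M)"
      using Cons.prems by (auto simp: le_div_geq)
    then show ?thesis
      using False Cons.IH by (simp add: nth_append)
  qed
qed

section \<open>\<open>L9\<close> needs more than \<open>n\<close> nonterminals\<close>

lemma length_blocks_const: "length (blocks (\<lambda>_. M) l r) = (Suc r - l) * M"
  by (simp add: length_concat comp_def sum_list_triv del: upt_Suc)

lemma nth_blocks_const:
  assumes "j < (Suc r - l) * M"
  shows "blocks (\<lambda>_. M) l r ! j = l + j div M"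
proof -
  have "j div M < Suc r - l"
    using assms by (rule less_mult_imp_div_less)
  then show ?thesis
    using nth_concat_replicate[of j "[l..<Suc r]" M "\<lambda>i. i"] assms by (simp del: upt_Suc)
qed

lemma splice_blocks_const_not_sorted:
  assumes "b < b'" "b' \<le> r - l" "b * M \<le> p" "p < Suc b * M" "b' * M < q" "q < Suc b' * M"
  shows "\<not> sorted (take q (blocks (\<lambda>_. M) l r) @ drop p (blocks (\<lambda>_. M) l r))"
proof
  let ?ys = "blocks (\<lambda>_. M) l r"
  let ?zs = "take q ?ys @ drop p ?ys"
  assume sorted: "sorted ?zs"
  have "Suc b * M \<le> b' * M" "Suc b' * M \<le> (Suc r - l) * M"
    using assms(1,2) by (intro mult_le_mono1; linarith)+
  then have pq: "p < q" "q < length ?ys"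
    using assms(4-6) by (simp_all add: length_blocks_const del: upt_Suc)
  have "(q - 1) div M = b'" "p div M = b"
    using assms(3-6) by (auto simp: algebra_simps intro!: div_nat_eqI)
  then have "?zs ! (q - 1) = l + b'" "?zs ! q = l + b"
    using pq assms(5) by (auto simp: nth_append nth_blocks_const length_blocks_const simp del: upt_Suc)
  moreover have "?zs ! (q - 1) \<le> ?zs ! q"
    using sorted pq by (intro sorted_nth_mono) auto
  ultimately show False
    using assms(1) by simp
qed

lemma L9_notin_RL_Var:
  assumes inj: "inj_on a {1..Suc n}"
  shows "L9 a n \<notin> RL_Var n"
proof
  assume "L9 a n \<in> RL_Var n"
  then obtain N T P S where G: "rlg N T P S" "card N \<le> n" and L: "rl_lang P S = L9 a n"
    unfolding RL_Var_def by blast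
  obtain m where short: "\<forall>(A, u, r) \<in> P. length u < m"
    using rlg_rule_length_bound[OF G(1)] .
  define M where "M = Suc m"
  define ys where "ys = blocks (\<lambda>_. M) 1 (Suc n)"
  have ys: "ys \<in> staircase_words 1 (Suc n)"
    unfolding ys_def by (intro blocks_in_staircase_words) (auto simp: M_def)
  then have "map a ys \<in> rl_lang P S"
    by (simp add: L L9_eq_map_staircase_words)
  moreover have "\<forall>b\<le>n. b * M + 1 + m \<le> length (map a ys)"
  proof (intro allI impI)
    fix b assume "b \<le> n"
    have "b * M + 1 + m = Suc b * M"
      unfolding M_def by simp
    also have "\<dots> \<le> Suc n * M"
      using \<open>b \<le> n\<close> by (intro mult_le_mono1) simp
    also have "\<dots> = length (map a ys)"
      by (simp add: ys_def length_blocks_const del: upt_Suc)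
    finally show "b * M + 1 + m \<le> length (map a ys)" .
  qed
  txt \<open>The windows start at \<open>b * M + 1\<close> so that the letter before a cut in block \<open>b'\<close>
    still belongs to block \<open>b'\<close>.\<close>
  ultimately obtain b b' p q where bb': "b < b'" "b' \<le> n"
      and p: "b * M + 1 \<le> p" "p < b * M + 1 + m" and q: "b' * M + 1 \<le> q" "q < b' * M + 1 + m"
      and spliced: "take q (map a ys) @ drop p (map a ys) \<in> rl_lang P S"
    using rl_lang_splice[OF G _ short, where s = "\<lambda>b. b * M + 1"] by blast
  define zs where "zs = take q ys @ drop p ys"
  have "set zs \<subseteq> {1..Suc n}"
    using set_staircase_words[OF ys] set_take_subset[of q ys] set_drop_subset[of p ys]
    by (auto simp: zs_def)
  moreover have "staircase_words 1 (Suc n) \<subseteq> lists {1..Suc n}"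
    using set_staircase_words by blast
  moreover have "map a zs \<in> map a ` staircase_words 1 (Suc n)"
    using spliced by (simp add: L L9_eq_map_staircase_words zs_def take_map drop_map)
  ultimately have "zs \<in> staircase_words 1 (Suc n)"
    by (simp add: map_in_map_image_iff[OF inj])
  moreover have "\<not> sorted zs"
    unfolding zs_def ys_def using bb' p q
    by (intro splice_blocks_const_not_sorted) (auto simp: M_def)
  ultimately show False
    using staircase_words_sorted by blast
qed

theorem mainTheorem20:
  fixes n :: nat and a :: "nat \<Rightarrow> 'a"
  assumes "n \<ge> 1" and "inj_on a {1..n+1}"
  shows "L9 a n \<in> SLT (a ` {1..n+1}) 2 - RL_Var n"
proof -
  have "staircase_words 1 (Suc n) \<in> SLT {1..Suc n} 2"
    using assms(1) by (intro staircase_words_in_SLT) simp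
  then have "L9 a n \<in> SLT (a ` {1..Suc n}) 2"
    unfolding L9_eq_map_staircase_words using assms(2) by (intro SLT_map_image) simp_all
  moreover have "L9 a n \<notin> RL_Var n"
    using assms(2) by (intro L9_notin_RL_Var) simp
  ultimately show ?thesis
    by simp
qed

end
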